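(* For the fully labeled one-dimensional rearrangement problem (LOR) on $m$ cells with a uniformly random initial permutation $\pi$, the expected total cost $T_{\mathrm{LOR}}(m)$ of the rearrangement plan computed by SweepCyclesLOR satisfies $$T_{\mathrm{LOR}}(m)\approx (m+H_m-2)\,c_p+\frac{m^2c_t}{3},$$ where $H_m=\sum_{i=1}^m 1/i$ is the $m$-th harmonic number: the expected number of pick-n-swaps is $m+H_m-2$ and the expected end-effector travel is $(1+o(1))\,m^2/3$ as $m\to\infty$.
   Context: Setting (LOR). A row of $m$ cells $1,\dots,m$, cell $i$ located at the point $i$ on the real line. Each cell initially holds exactly one item; items carry distinct labels $1,\dots,m$. An instance is a permutation $\pi$ of $\{1,\dots,m\}$, where $\pi_i$ is the label of the item initially in cell $i$; the goal is that item $i$ ends in cell $i$. A robot end-effector can hold at most one item; it starts at cell $1$ holding nothing. A pick-n-swap operation at a cell $p$: if holding nothing, pick up the item in $p$; if holding an item and $p$ contains an item, exchange the two; if holding an item and $p$ is empty, put the held item into $p$. A plan is a sequence $P=(p_0,p_1,\dots,p_N)$ of cells ($p_0=$ cell $1$) visited in order with a pick-n-swap at each of $p_1,\dots,p_N$, followed by a return to $p_{N+1}:=p_0$. Its total cost is $J_T(P)=Nc_p+\sum_{i=0}^{N}|p_i-p_{i+1}|\,c_t$ with constants $c_p,c_t>0$. SweepCyclesLOR: while some cell $i$ holds an item with label $\ne i$, let $i$ be the smallest such cell; go to $i$ and pick up its item, say with label $g$; while $g\neq i$, go to cell $g$ and swap (item $g$ is placed in cell $g$ and the item previously in cell $g$,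 with label $g'$, becomes held; set $g:=g'$); finally go to cell $i$ and place the held item. When done, return to cell $1$. *)

theory Defs
  imports "HOL-Analysis.Analysis" "HOL-Combinatorics.Permutations" "HOL-Library.Landau_Symbols"
begin

text \<open>LOR model. An arrangement maps each cell to the label of the item it holds
 (None = empty cell). A configuration is (arrangement, held item of the end-effector).\<close>

type_synonym arrangement = "nat \<Rightarrow> nat option"
type_synonym config = "arrangement \<times> nat option"

text \<open>pick-n-swap at cell p: pick up if holding nothing; exchange if holding and p occupied;
 put down if holding and p empty.  All three cases: new held := old content of p,
 new content of p := old held.\<close>
definition pns :: "config \<Rightarrow> nat \<Rightarrow> config" where
  "pns c p = ((fst c)(p := snd c), fst c p)"

text \<open>Inner loop of SweepCyclesLOR (with fuel): the end-effector holds item g, started at cell i.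
 While g \<noteq> i: go to g and swap; finally go to i and place.  Returns visited cells and final config.\<close>
fun chase :: "nat \<Rightarrow> nat \<Rightarrow> config \<Rightarrow> nat list \<times> config" where
  "chase 0 i c = ([], c)"
| "chase (Suc n) i c =
     (let g = the (snd c) in
      if g = i then ([i], pns c i)
      else (let r = chase n i (pns c g) in (g # fst r, snd r)))"

fun sweep :: "nat \<Rightarrow> nat \<Rightarrow> arrangement \<Rightarrow> nat list" where
  "sweep 0 m a = []"
| "sweep (Suc n) m a =
     (if \<exists>i\<in>{1..m}. a i \<noteq> Some i then
        (let i = (LEAST i. i \<in> {1..m} \<and> a i \<noteq> Some i);
             r = chase m i (pns (a, None) i)
         in i # fst r @ sweep n m (fst (snd r)))
      else [])"

definition init_arr :: "(nat \<Rightarrow> nat) \<Rightarrow> nat \<Rightarrow> arrangement" where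
  "init_arr \<pi> m = (\<lambda>i. if i \<in> {1..m} then Some (\<pi> i) else None)"

text \<open>The pick-n-swap cells p_1..p_N of the plan computed by SweepCyclesLOR
 (fuel m suffices for both loops; each loop terminates well within it).\<close>
definition sweep_plan :: "nat \<Rightarrow> (nat \<Rightarrow> nat) \<Rightarrow> nat list" where
  "sweep_plan m \<pi> = sweep m m (init_arr \<pi> m)"

definition num_pns :: "nat list \<Rightarrow> nat" where
  "num_pns ps = length ps"

fun path_len :: "nat list \<Rightarrow> real" where
  "path_len (x # y # zs) = \<bar>real x - real y\<bar> + path_len (y # zs)"
| "path_len _ = 0"

definition travel :: "nat list \<Rightarrow> real" where
  "travel ps = path_len (1 # ps @ [1])"

definition total_cost :: "real \<Rightarrow> real \<Rightarrow> nat list \<Rightarrow> real" where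
  "total_cost cp ct ps = real (num_pns ps) * cp + travel ps * ct"

definition expect_perm :: "nat \<Rightarrow> ((nat \<Rightarrow> nat) \<Rightarrow> real) \<Rightarrow> real" where
  "expect_perm m f = (\<Sum>\<pi>\<in>{\<pi>. \<pi> permutes {1..m}}. f \<pi>) / real (card {\<pi>. \<pi> permutes {1..m}})"

end

theory Submission
  imports Defs "HOL-Combinatorics.Orbits" "HOL-Real_Asymp.Real_Asymp"
begin

(* SweepCyclesLOR treats the cycles of pi one at a time, in increasing order of their least
   elements: it picks at the least element i of a cycle, walks once around the cycle and puts
   the last item down at i.  A cycle of length k >= 2 thus costs k + 1 pick-n-swaps, so
   N = (m - #fixed points) + (#cycles - #fixed points).  Its travel is the sum of |x - pi x|
   over the cycle; the remaining travel, from cell 1 up through the starting cells and back,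
   is at most 2m.  Averaging over pi: each cell is fixed with probability 1/m; pi x is uniform,
   so the sum of |x - pi x| has mean (m^2 - 1)/3; and the mean number of cycles is H_m, since
   writing a permutation of {1..m+1} as the transposition (m+1 b) after a permutation of
   {1..m} adds a cycle exactly when b = m + 1. *)

lemma chase_walk:
  assumes "distinct (map w [0..<Suc k])" "w k = i" "b i = None"
    and "\<And>t. t < k \<Longrightarrow> b (w t) = Some (w (Suc t))" "k < n"
  shows "chase n i (b, Some (w 0)) =
           (map w [0..<Suc k], (\<lambda>x. if x \<in> w ` {..k} then Some x else b x, None))"
  using assms
proof (induction k arbitrary: w b n)
  case 0
  then obtain n' where "n = Suc n'" by (cases n) auto
  with 0 show ?case by (auto simp: pns_def fun_eq_iff)
next
  case (Suc k)
  obtain n' where n: "n = Suc n'" and k: "k < n'" using Suc.prems(5) by (cases n) auto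
  let ?w = "\<lambda>t. w (Suc t)"
  let ?b = "b(w 0 := Some (w 0))"
  have fresh: "w 0 \<notin> ?w ` {..k}" and dist: "distinct (map ?w [0..<Suc k])"
    using Suc.prems(1) unfolding map_upt_Suc[of w]
    by (auto simp: atLeast0LessThan lessThan_Suc_atMost simp del: upt_Suc)
  have w0: "w 0 \<noteq> i" using fresh Suc.prems(2) by auto
  have "chase n' i (?b, Some (?w 0)) =
          (map ?w [0..<Suc k], (\<lambda>x. if x \<in> ?w ` {..k} then Some x else ?b x, None))"
  proof (rule Suc.IH[OF dist])
    show "?w k = i" using Suc.prems(2) .
    show "?b i = None" using Suc.prems(3) w0 by simp
    show "?b (?w t) = Some (?w (Suc t))" if "t < k" for t
    proof -
      have "?w t \<noteq> w 0" using fresh that by (metis atMost_iff image_eqI less_imp_le_nat)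
      then show ?thesis using Suc.prems(4)[of "Suc t"] that by simp
    qed
  qed (rule k)
  moreover have "pns (b, Some (w 0)) (w 0) = (?b, Some (?w 0))"
    using Suc.prems(4)[of 0] by (simp add: pns_def)
  moreover have "w ` {..Suc k} = insert (w 0) (?w ` {..k})"
    by (simp add: atMost_Suc_eq_insert_0 image_image)
  ultimately show ?case
    by (simp add: n w0 Let_def map_upt_Suc[of w] del: upt_Suc) (auto simp: fun_eq_iff)
qed

lemma path_len_map_upt:
  "path_len (map w [0..<Suc k]) = (\<Sum>t<k. \<bar>real (w t) - real (w (Suc t))\<bar>)"
proof (induction k arbitrary: w)
  case (Suc k)
  have "path_len (map w [0..<Suc (Suc k)])
          = \<bar>real (w 0) - real (w (Suc 0))\<bar> + path_len (map (\<lambda>t. w (Suc t)) [0..<Suc k])"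
    by (simp only: map_upt_Suc path_len.simps(1))
  then show ?case by (simp add: Suc.IH sum.lessThan_Suc_shift del: upt_Suc sum.lessThan_Suc)
qed simp

lemma path_len_append:
  "xs \<noteq> [] \<Longrightarrow> path_len (xs @ ys) = path_len xs + path_len (last xs # ys)"
proof (induction xs)
  case (Cons x xs)
  then show ?case by (cases xs) auto
qed simp

section \<open>Walking once around a cycle\<close>

definition cycle_walk :: "('a \<Rightarrow> 'a) \<Rightarrow> 'a \<Rightarrow> 'a list" where
  "cycle_walk p i = map (\<lambda>t. (p ^^ t) (p i)) [0..<Suc (funpow_dist p (p i) i)]"

context
  fixes p :: "'a \<Rightarrow> 'a" and i :: 'a
  assumes perm: "permutation p"
begin

private abbreviation (input) "d \<equiv> funpow_dist p (p i) i"
private abbreviation (input) "w \<equiv> \<lambda>t. (p ^^ t) (p i)"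

lemma in_orbit_apply: "i \<in> orbit p (p i)"
  using perm by (simp add: permutation_orbit_step permutation_self_in_orbit)

lemma funpow_dist_apply_prop: "w d = i"
  using funpow_dist_prop[OF in_orbit_apply] .

lemma image_funpow_dist_apply: "w ` {..d} = orbit p i"
proof -
  have "(p ^^ Suc d) (p i) = p i" using funpow_dist_apply_prop by simp
  then have "orbit p (p i) = {w t |t. t < Suc d}" by (rule orbit_altdef_bounded) simp
  then show ?thesis using perm by (auto simp: permutation_orbit_step less_Suc_eq_le)
qed

lemma set_cycle_walk: "set (cycle_walk p i) = orbit p i"
  using image_funpow_dist_apply
  by (simp add: cycle_walk_def atLeast0LessThan lessThan_Suc_atMost del: upt_Suc)

lemma distinct_cycle_walk: "distinct (cycle_walk p i)"
  using inj_on_funpow_dist[OF in_orbit_apply]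
  by (simp add: cycle_walk_def distinct_map atLeast0LessThan lessThan_Suc_atMost atLeast0AtMost
      del: upt_Suc)

lemma length_cycle_walk: "length (cycle_walk p i) = card (orbit p i)"
  using distinct_card[OF distinct_cycle_walk] set_cycle_walk by simp

lemma last_cycle_walk: "last (cycle_walk p i) = i"
  using funpow_dist_apply_prop by (simp add: cycle_walk_def)

end

lemma path_len_cycle_walk:
  fixes p :: "nat \<Rightarrow> nat"
  assumes perm: "permutation p"
  shows "path_len (i # cycle_walk p i) = (\<Sum>x\<in>orbit p i. \<bar>real x - real (p x)\<bar>)"
proof -
  let ?d = "funpow_dist p (p i) i" and ?w = "\<lambda>t. (p ^^ t) (p i)"
  have "path_len (i # cycle_walk p i) = \<bar>real i - real (p i)\<bar> + path_len (cycle_walk p i)"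
    by (simp add: cycle_walk_def map_upt_Suc del: upt_Suc)
  also have "\<dots> = (\<Sum>t<Suc ?d. \<bar>real (?w t) - real (p (?w t))\<bar>)"
    by (simp add: cycle_walk_def path_len_map_upt funpow_dist_apply_prop[OF perm] del: upt_Suc)
  also have "\<dots> = (\<Sum>x\<in>?w ` {..?d}. \<bar>real x - real (p x)\<bar>)"
    using inj_on_funpow_dist[OF in_orbit_apply[OF perm]]
    by (simp add: sum.reindex lessThan_Suc_atMost atLeast0AtMost)
  finally show ?thesis by (simp only: image_funpow_dist_apply[OF perm])
qed

lemma chase_cycle_walk:
  fixes p :: "nat \<Rightarrow> nat"
  assumes perm: "permutation p"
    and "b i = None" "\<And>x. x \<in> orbit p i \<Longrightarrow> x \<noteq> i \<Longrightarrow> b x = Some (p x)"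
    and "card (orbit p i) \<le> n"
  shows "chase n i (b, Some (p i)) =
           (cycle_walk p i, (\<lambda>x. if x \<in> orbit p i then Some x else b x, None))"
proof -
  let ?d = "funpow_dist p (p i) i" and ?w = "\<lambda>t. (p ^^ t) (p i)"
  have "chase n i (b, Some (?w 0)) =
          (map ?w [0..<Suc ?d], (\<lambda>x. if x \<in> ?w ` {..?d} then Some x else b x, None))"
  proof (rule chase_walk)
    show "distinct (map ?w [0..<Suc ?d])" using distinct_cycle_walk[OF perm] by (simp add: cycle_walk_def)
    have "Suc ?d = card (orbit p i)" using length_cycle_walk[OF perm, of i] by (simp add: cycle_walk_def)
    then show "?d < n" using assms(4) by simp
    fix t assume "t < ?d"
    then have "?w t \<noteq> i" by (rule funpow_dist_least)
    moreover have "?w t \<in> orbit p i" using image_funpow_dist_apply[OF perm, of i] \<open>t < ?d\<close> by auto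
    ultimately show "b (?w t) = Some (?w (Suc t))" using assms(3) by simp
  qed (use funpow_dist_apply_prop[OF perm] assms(2) in auto)
  then show ?thesis by (simp add: cycle_walk_def image_funpow_dist_apply[OF perm])
qed

section \<open>Removing a cycle from a permutation\<close>

definition drop_cycle :: "('a \<Rightarrow> 'a) \<Rightarrow> 'a \<Rightarrow> 'a \<Rightarrow> 'a" where
  "drop_cycle p i x = (if x \<in> orbit p i then x else p x)"

lemma orbit_disjoint_fixpoints:
  assumes perm: "permutation p" and "p i \<noteq> i"
  shows "orbit p i \<inter> fixpoints p = {}"
proof -
  have "x = i" if "x \<in> orbit p i" "p x = x" for x
  proof -
    have "i \<in> orbit p x"
      using orbit_swap[OF permutation_self_in_orbit[OF perm] that(1)] .
    then show ?thesis using \<open>p x = x\<close> by (simp add: orbit_eq_singleton_iff[THEN iffD2])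
  qed
  then show ?thesis using assms(2) by auto
qed

lemma orbit_drop_cycle:
  assumes perm: "permutation p" and "x \<notin> orbit p i"
  shows "orbit (drop_cycle p i) x = orbit p x"
proof (rule orbit_cong)
  show x: "x \<in> orbit p x" using perm by (rule permutation_self_in_orbit)
  fix s assume s: "s \<in> orbit p x"
  have "s \<notin> orbit p i"
  proof
    assume "s \<in> orbit p i"
    then have "orbit p s = orbit p i" by (rule orbit_cyclic_eq3[OF cyclic_on_orbit'[OF perm]])
    with orbit_swap[OF x s] assms(2) show False by simp
  qed
  then show "drop_cycle p i s = p s" by (simp add: drop_cycle_def)
qed

lemma permutes_drop_cycle:
  assumes "p permutes S" "finite S"
  shows "drop_cycle p i permutes S"
proof -
  have "drop_cycle p i = perm_restrict p (S - orbit p i)"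
    using permutes_not_in[OF assms(1)] by (auto simp: drop_cycle_def perm_restrict_def)
  moreover have "perm_restrict p (S - orbit p i) permutes S - orbit p i"
    using assms by (intro perm_restrict_diff_cyclic cyclic_on_orbit)
  ultimately show ?thesis by (auto intro: permutes_subset)
qed

lemma fixpoints_drop_cycle: "fixpoints (drop_cycle p i) = fixpoints p \<union> orbit p i"
  by (auto simp: drop_cycle_def)

definition cycle_minima :: "'a::linorder set \<Rightarrow> ('a \<Rightarrow> 'a) \<Rightarrow> 'a set" where
  "cycle_minima S p = {x\<in>S. \<forall>y\<in>orbit p x. x \<le> y}"

definition displacement :: "nat set \<Rightarrow> (nat \<Rightarrow> nat) \<Rightarrow> real" where
  "displacement S p = (\<Sum>x\<in>S. \<bar>real x - real (p x)\<bar>)"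

lemma fixpoints_subset_cycle_minima: "S \<inter> fixpoints p \<subseteq> cycle_minima S p"
  by (auto simp: cycle_minima_def orbit_eq_singleton_iff[THEN iffD2])

lemma cycle_minima_drop_cycle:
  assumes "permutation p"
  shows "cycle_minima S (drop_cycle p i) - fixpoints (drop_cycle p i)
           = cycle_minima S p - fixpoints p - orbit p i"
proof (intro set_eqI)
  fix x
  show "x \<in> cycle_minima S (drop_cycle p i) - fixpoints (drop_cycle p i)
          \<longleftrightarrow> x \<in> cycle_minima S p - fixpoints p - orbit p i"
    by (cases "x \<in> orbit p i")
       (simp_all add: cycle_minima_def drop_cycle_def orbit_drop_cycle[OF assms])
qed

lemma cycle_minima_inter_orbit:
  assumes perm: "p permutes S" "finite S" and i: "i \<in> S" "p i \<noteq> i"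
    and least: "\<And>x. x \<in> S - fixpoints p \<Longrightarrow> i \<le> x"
  shows "(cycle_minima S p - fixpoints p) \<inter> orbit p i = {i}"
proof (intro set_eqI iffI)
  have permutation: "permutation p" using perm permutation_permutes by blast
  have self: "i \<in> orbit p i" using permutation by (rule permutation_self_in_orbit)
  have lower: "i \<le> y" if "y \<in> orbit p i" for y
    using least orbit_disjoint_fixpoints[OF permutation i(2)] permutes_orbit_subset[OF perm(1) i(1)] that
    by auto
  fix x
  show "x \<in> {i}" if x: "x \<in> (cycle_minima S p - fixpoints p) \<inter> orbit p i"
  proof -
    have "orbit p x = orbit p i" using x orbit_cyclic_eq3[OF cyclic_on_orbit'[OF permutation]] by blast
    then have "x \<le> i" using x self by (auto simp: cycle_minima_def)
    with lower[of x] x show ?thesis by simp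
  qed
  show "x \<in> (cycle_minima S p - fixpoints p) \<inter> orbit p i" if "x \<in> {i}"
    using that self i lower by (simp add: cycle_minima_def)
qed

lemma card_drop_least_cycle:
  assumes perm: "p permutes S" "finite S" and i: "i \<in> S" "p i \<noteq> i"
    and least: "\<And>x. x \<in> S - fixpoints p \<Longrightarrow> i \<le> x"
  shows "card (S - fixpoints p) = card (orbit p i) + card (S - fixpoints (drop_cycle p i))"
    and "card (cycle_minima S p - fixpoints p)
           = Suc (card (cycle_minima S (drop_cycle p i) - fixpoints (drop_cycle p i)))"
proof -
  have permutation: "permutation p" using perm permutation_permutes by blast
  have C: "orbit p i \<subseteq> S - fixpoints p"
    using orbit_disjoint_fixpoints[OF permutation i(2)] permutes_orbit_subset[OF perm(1) i(1)] by auto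
  have "S - fixpoints (drop_cycle p i) = (S - fixpoints p) - orbit p i"
    by (auto simp: fixpoints_drop_cycle)
  then show "card (S - fixpoints p) = card (orbit p i) + card (S - fixpoints (drop_cycle p i))"
    using C perm(2) by (simp add: card_Diff_subset card_mono finite_subset[OF C])
  let ?N = "cycle_minima S p - fixpoints p"
  have "?N = insert i (?N - orbit p i)"
    using cycle_minima_inter_orbit[OF assms] by blast
  moreover have "i \<notin> ?N - orbit p i" "finite ?N"
    using permutation_self_in_orbit[OF permutation, of i] perm(2) by (auto simp: cycle_minima_def)
  ultimately show "card ?N = Suc (card (cycle_minima S (drop_cycle p i) - fixpoints (drop_cycle p i)))"
    unfolding cycle_minima_drop_cycle[OF permutation] by (metis card_insert_disjoint finite_Diff)
qed

lemma displacement_drop_cycle: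
  assumes "p permutes S" "finite S" "i \<in> S"
  shows "displacement S p = (\<Sum>x\<in>orbit p i. \<bar>real x - real (p x)\<bar>) + displacement S (drop_cycle p i)"
proof -
  have sub: "orbit p i \<subseteq> S" using permutes_orbit_subset[OF assms(1,3)] .
  have split: "(\<Sum>x\<in>S. f x) = (\<Sum>x\<in>S - orbit p i. f x) + (\<Sum>x\<in>orbit p i. f x)"
    for f :: "nat \<Rightarrow> real"
    using sum.subset_diff[OF sub assms(2)] .
  have "displacement S (drop_cycle p i) = (\<Sum>x\<in>S - orbit p i. \<bar>real x - real (p x)\<bar>)"
    unfolding displacement_def split by (simp add: drop_cycle_def)
  then show ?thesis unfolding displacement_def split by simp
qed

lemma sweep_init_arr_id:
  assumes "{1..m} \<subseteq> fixpoints p"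
  shows "sweep n m (init_arr p m) = []" "displacement {1..m} p = 0"
    and "cycle_minima {1..m} p - fixpoints p = {}"
proof -
  have fixed: "p x = x" if "x \<in> {1..m}" for x using assms that by auto
  show "sweep n m (init_arr p m) = []" using fixed by (cases n) (auto simp: init_arr_def)
  show "displacement {1..m} p = 0" using fixed by (simp add: displacement_def)
  show "cycle_minima {1..m} p - fixpoints p = {}" using fixed by (auto simp: cycle_minima_def)
qed

lemma sweep_Suc_init_arr:
  assumes perm: "p permutes {1..m}" and i: "i \<in> {1..m}" "p i \<noteq> i"
    and least: "\<And>x. x \<in> {1..m} - fixpoints p \<Longrightarrow> i \<le> x"
  shows "sweep (Suc n) m (init_arr p m) = i # cycle_walk p i @ sweep n m (init_arr (drop_cycle p i) m)"
proof -
  let ?C = "orbit p i" and ?b = "(init_arr p m)(i := None)"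
  have permutation: "permutation p" using perm permutation_permutes by blast
  have sub: "?C \<subseteq> {1..m}" using permutes_orbit_subset[OF perm i(1)] .
  have "(LEAST j. j \<in> {1..m} \<and> init_arr p m j \<noteq> Some j) = i"
    using i least by (intro Least_equality) (auto simp: init_arr_def)
  moreover have "pns (init_arr p m, None) i = (?b, Some (p i))"
    using i by (simp add: pns_def init_arr_def)
  moreover have "chase m i (?b, Some (p i)) = (cycle_walk p i, (\<lambda>x. if x \<in> ?C then Some x else ?b x, None))"
    using sub card_mono[OF _ sub] by (intro chase_cycle_walk[OF permutation]) (auto simp: init_arr_def)
  moreover have "(\<lambda>x. if x \<in> ?C then Some x else ?b x) = init_arr (drop_cycle p i) m"
    using sub permutation_self_in_orbit[OF permutation, of i]
    by (auto simp: fun_eq_iff init_arr_def drop_cycle_def)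
  ultimately show ?thesis
    using i by (auto simp: init_arr_def Let_def)
qed

lemma sweep_init_arr_cost:
  assumes "p permutes {1..m}" "card ({1..m} - fixpoints p) \<le> n"
    and "1 \<le> q" "q \<le> m + 1" "\<And>x. x \<in> {1..m} - fixpoints p \<Longrightarrow> q \<le> x"
  shows "length (sweep n m (init_arr p m))
           = card ({1..m} - fixpoints p) + card (cycle_minima {1..m} p - fixpoints p)
       \<and> displacement {1..m} p \<le> path_len (q # sweep n m (init_arr p m) @ [1])
       \<and> path_len (q # sweep n m (init_arr p m) @ [1]) \<le> displacement {1..m} p + 2 * real m + 1 - real q"
  using assms
proof (induction n arbitrary: p q)
  case 0
  then have "{1..m} \<subseteq> fixpoints p" by auto
  from sweep_init_arr_id[OF this] show ?case using 0 by (simp add: card_eq_0_iff)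
next
  case (Suc n)
  let ?M = "\<lambda>p. {1..m} - fixpoints p"
  show ?case
  proof (cases "?M p = {}")
    case True
    then have fixed: "{1..m} \<subseteq> fixpoints p" by auto
    from sweep_init_arr_id[OF fixed] show ?thesis using fixed Suc.prems by (simp add: card_eq_0_iff)
  next
    case False
    define i where "i = (LEAST x. x \<in> ?M p)"
    have "i \<in> ?M p" unfolding i_def by (rule LeastI_ex) (use False in blast)
    then have i: "i \<in> {1..m}" "p i \<noteq> i" by auto
    have least: "\<And>x. x \<in> ?M p \<Longrightarrow> i \<le> x" unfolding i_def by (rule Least_le)
    have perm: "p permutes {1..m}" and fin: "finite {1..m}" using Suc.prems(1) by simp_all
    have permutation: "permutation p" using perm permutation_permutes by blast
    let ?p' = "drop_cycle p i" and ?walk = "i # cycle_walk p i"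
    note card = card_drop_least_cycle[OF perm fin i least]
    have "card (orbit p i) \<noteq> 0"
      using permutation_self_in_orbit[OF permutation, of i] card_gt_0_iff
        finite_subset[OF permutes_orbit_subset[OF perm i(1)]] by fastforce
    then have bound: "card (?M ?p') \<le> n" using Suc.prems(2) card(1) by simp
    have lower: "\<And>x. x \<in> ?M ?p' \<Longrightarrow> i \<le> x" using least by (auto simp: fixpoints_drop_cycle)
    have "1 \<le> i" "i \<le> m + 1" using i(1) by auto
    note IH = Suc.IH[OF permutes_drop_cycle[OF perm fin] bound this lower]
    have sweep: "sweep (Suc n) m (init_arr p m) = i # cycle_walk p i @ sweep n m (init_arr ?p' m)"
      by (rule sweep_Suc_init_arr[OF perm i least])
    have "path_len (q # sweep (Suc n) m (init_arr p m) @ [1])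
            = \<bar>real q - real i\<bar> + path_len ?walk + path_len (i # sweep n m (init_arr ?p' m) @ [1])"
      unfolding sweep using path_len_append[of "q # ?walk"] last_cycle_walk[OF permutation, of i]
      by (simp add: cycle_walk_def del: upt_Suc)
    moreover have "q \<le> i" using Suc.prems(5) i by blast
    moreover have "displacement {1..m} p = path_len ?walk + displacement {1..m} ?p'"
      unfolding path_len_cycle_walk[OF permutation] by (rule displacement_drop_cycle[OF perm fin i(1)])
    ultimately show ?thesis
      using IH card sweep by (simp add: length_cycle_walk[OF permutation])
  qed
qed

lemma sweep_plan_cost:
  assumes "p permutes {1..m}"
  shows "real (num_pns (sweep_plan m p))
           = real m + real (card (cycle_minima {1..m} p)) - 2 * real (card ({1..m} \<inter> fixpoints p))"
    and "displacement {1..m} p \<le> travel (sweep_plan m p)"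
    and "travel (sweep_plan m p) \<le> displacement {1..m} p + 2 * real m"
proof -
  let ?F = "{1..m} \<inter> fixpoints p" and ?L = "cycle_minima {1..m} p"
  have moved: "card ({1..m} - fixpoints p) \<le> m"
    using card_mono[OF finite_atLeastAtMost Diff_subset, of 1 m "fixpoints p"] by simp
  have sweep: "length (sweep m m (init_arr p m))
           = card ({1..m} - fixpoints p) + card (?L - fixpoints p)
       \<and> displacement {1..m} p \<le> path_len (1 # sweep m m (init_arr p m) @ [1])
       \<and> path_len (1 # sweep m m (init_arr p m) @ [1]) \<le> displacement {1..m} p + 2 * real m + 1 - real (1::nat)"
    by (rule sweep_init_arr_cost[OF assms moved]) auto
  then show "displacement {1..m} p \<le> travel (sweep_plan m p)"
    and "travel (sweep_plan m p) \<le> displacement {1..m} p + 2 * real m"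
    by (simp_all add: travel_def sweep_plan_def)
  have L: "?L \<subseteq> {1..m}" by (auto simp: cycle_minima_def)
  have F: "?F \<subseteq> ?L" by (rule fixpoints_subset_cycle_minima)
  have "?L \<inter> fixpoints p = ?F" using L F by blast
  then have "card (?L - fixpoints p) = card ?L - card ?F"
    using finite_subset[OF L] by (simp add: card_Diff_subset_Int)
  moreover have "card ({1..m} - fixpoints p) = m - card ?F" by (simp add: card_Diff_subset_Int)
  moreover have "card ?F \<le> card ?L" using card_mono[OF finite_subset[OF L] F] by simp
  moreover have "card ?L \<le> m" using card_mono[OF finite_atLeastAtMost L] by simp
  ultimately show "real (num_pns (sweep_plan m p)) = real m + real (card ?L) - 2 * real (card ?F)"
    using sweep by (simp add: num_pns_def sweep_plan_def of_nat_diff)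
qed

section \<open>Averages over all permutations\<close>

lemma card_permutes_apply_eq:
  assumes "finite S" "x \<in> S" "y \<in> S"
  shows "card {p. p permutes S \<and> p x = y} = fact (card S - 1)"
proof -
  let ?f = "\<lambda>p. Transposition.transpose x y \<circ> p"
  have "bij_betw ?f {p. p permutes S \<and> p x = y} {p. p permutes S - {x}}"
  proof (rule bij_betw_byWitness[where f' = ?f])
    show "?f ` {p. p permutes S \<and> p x = y} \<subseteq> {p. p permutes S - {x}}"
    proof (rule image_subsetI)
      fix p assume "p \<in> {p. p permutes S \<and> p x = y}"
      then have p: "p permutes S" "p x = y" by auto
      then have "?f p permutes S" using assms by (intro permutes_compose permutes_swap_id) auto
      moreover have "?f p x = x" using p by simp
      ultimately show "?f p \<in> {p. p permutes S - {x}}" unfolding permutes_def by auto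
    qed
    show "?f ` {p. p permutes S - {x}} \<subseteq> {p. p permutes S \<and> p x = y}"
    proof (rule image_subsetI, clarify)
      fix p assume p: "p permutes S - {x}"
      then have "p permutes S" by (rule permutes_subset) auto
      moreover have "p x = x" using p permutes_not_in by fastforce
      ultimately show "?f p permutes S \<and> ?f p x = y"
        using assms by (simp add: permutes_compose permutes_swap_id)
    qed
  qed (auto simp: fun_eq_iff)
  then have "card {p. p permutes S \<and> p x = y} = card {p. p permutes S - {x}}"
    by (rule bij_betw_same_card)
  also have "\<dots> = fact (card S - 1)" using assms by (intro card_permutations) auto
  finally show ?thesis .
qed

lemma sum_permutes_apply:
  fixes f :: "'a \<Rightarrow> 'a \<Rightarrow> 'b::comm_semiring_1"
  assumes "finite S"
  shows "(\<Sum>p | p permutes S. \<Sum>x\<in>S. f x (p x)) = of_nat (fact (card S - 1)) * (\<Sum>x\<in>S. \<Sum>y\<in>S. f x y)"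
proof -
  let ?P = "{p. p permutes S}"
  have column: "(\<Sum>p\<in>?P. f x (p x)) = of_nat (fact (card S - 1)) * (\<Sum>y\<in>S. f x y)"
    if x: "x \<in> S" for x
  proof -
    have "(\<Sum>p\<in>?P. f x (p x)) = (\<Sum>y\<in>S. \<Sum>p | p \<in> ?P \<and> p x = y. f x (p x))"
      using x by (intro sum.group[symmetric] assms finite_permutations) (auto simp: permutes_in_image)
    also have "\<dots> = (\<Sum>y\<in>S. \<Sum>p | p permutes S \<and> p x = y. f x y)"
      by (intro sum.cong) auto
    also have "\<dots> = (\<Sum>y\<in>S. of_nat (fact (card S - 1)) * f x y)"
      using x assms by (intro sum.cong refl) (simp add: card_permutes_apply_eq)
    finally show ?thesis by (simp only: sum_distrib_left)
  qed
  have "(\<Sum>p\<in>?P. \<Sum>x\<in>S. f x (p x)) = (\<Sum>x\<in>S. \<Sum>p\<in>?P. f x (p x))"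
    by (rule sum.swap)
  also have "\<dots> = (\<Sum>x\<in>S. of_nat (fact (card S - 1)) * (\<Sum>y\<in>S. f x y))"
    by (intro sum.cong refl column)
  finally show ?thesis by (simp only: sum_distrib_left)
qed

lemma sum_permutes_card_fixpoints:
  assumes "finite S" "S \<noteq> {}"
  shows "(\<Sum>p | p permutes S. card (S \<inter> fixpoints p)) = fact (card S)"
proof -
  have "card (S \<inter> fixpoints p) = (\<Sum>x\<in>S. if p x = x then 1 else 0)" for p
    by (simp only: card_eq_sum sum.inter_restrict[OF assms(1)] mem_Collect_eq)
  then have "(\<Sum>p | p permutes S. card (S \<inter> fixpoints p)) = fact (card S - 1) * (\<Sum>x\<in>S. \<Sum>y\<in>S. if y = x then 1 else 0)"
    using sum_permutes_apply[OF assms(1), of "\<lambda>x y. if y = x then 1 else 0 :: nat"] by simp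
  also have "\<dots> = fact (card S - 1) * card S" using assms(1) by simp
  also have "\<dots> = fact (card S)"
    using assms by (simp add: fact_reduce[of "card S"] card_gt_0_iff)
  finally show ?thesis .
qed

lemma sum_abs_diff_atLeastAtMost:
  "(\<Sum>x\<in>{1..m}. \<Sum>y\<in>{1..m}. \<bar>real x - real y\<bar>) = (real m ^ 3 - real m) / 3"
proof (induction m)
  case (Suc m)
  let ?row = "\<Sum>y\<in>{1..m}. \<bar>real (Suc m) - real y\<bar>"
  have "?row = (\<Sum>y\<in>{1..m}. real (Suc m) - real y)" by (intro sum.cong) auto
  also have "\<dots> = real m * (real m + 1) - (\<Sum>y\<in>{1..m}. real y)" by (simp add: sum_subtractf)
  moreover have "2 * (\<Sum>y\<in>{1..m}. real y) = real m * (real m + 1)"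
    using double_gauss_sum_from_Suc_0[of m, where 'a = real] by simp
  ultimately have row: "?row = real m * (real m + 1) / 2" by linarith
  have "{1..Suc m} = insert (Suc m) {1..m}" by auto
  moreover have "(\<Sum>x\<in>{1..m}. \<bar>real x - real (Suc m)\<bar>) = ?row"
    by (intro sum.cong) auto
  ultimately have "(\<Sum>x\<in>{1..Suc m}. \<Sum>y\<in>{1..Suc m}. \<bar>real x - real y\<bar>)
                     = 2 * ?row + (\<Sum>x\<in>{1..m}. \<Sum>y\<in>{1..m}. \<bar>real x - real y\<bar>)"
    by (simp add: sum.distrib del: of_nat_Suc)
  then show ?case unfolding Suc.IH row by (simp add: field_simps power3_eq_cube)
qed simp

lemma sum_permutes_displacement:
  "(\<Sum>p | p permutes {1..m}. displacement {1..m} p) = fact (m - 1) * ((real m ^ 3 - real m) / 3)"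
proof -
  have "(\<Sum>p | p permutes {1..m}. displacement {1..m} p)
          = of_nat (fact (card {1..m} - 1)) * (\<Sum>x\<in>{1..m}. \<Sum>y\<in>{1..m}. \<bar>real x - real y\<bar>)"
    unfolding displacement_def by (rule sum_permutes_apply) simp
  then show ?thesis unfolding sum_abs_diff_atLeastAtMost by simp
qed

lemma orbit_transpose_comp:
  assumes q: "q permutes S" and a: "a \<notin> S" and x: "x \<in> S"
  shows "orbit q x \<subseteq> orbit (Transposition.transpose a b \<circ> q) x"
    and "orbit (Transposition.transpose a b \<circ> q) x \<subseteq> insert a (orbit q x)"
proof -
  let ?p = "Transposition.transpose a b \<circ> q"
  have pa: "?p a = b" using permutes_not_in[OF q a] by simp
  have redirect: "q z = ?p z \<or> (?p z = a \<and> q z = b)" if "z \<in> S" for z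
  proof -
    have "q z \<noteq> a" using permutes_in_image[OF q] that a by auto
    then show ?thesis by (cases "q z = b") auto
  qed
  have orbit_q: "orbit q x \<subseteq> S" by (rule permutes_orbit_subset[OF q x])
  show "orbit q x \<subseteq> orbit ?p x"
  proof
    fix y assume "y \<in> orbit q x"
    then show "y \<in> orbit ?p x"
    proof (induction rule: orbit.induct)
      case base
      from redirect[OF x] show ?case using pa by (metis orbit.base orbit.step)
    next
      case (step y)
      then have "y \<in> S" using orbit_q by blast
      from redirect[OF this] show ?case using step.IH pa by (metis orbit.step)
    qed
  qed
  have "y \<in> orbit q x \<or> (y = a \<and> b \<in> orbit q x)" if "y \<in> orbit ?p x" for y
    using that
  proof (induction rule: orbit.induct)
    case base
    from redirect[OF x] show ?case by (metis orbit.base)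
  next
    case (step y)
    from step.IH show ?case
    proof
      assume "y \<in> orbit q x"
      with orbit_q redirect show ?case by (metis orbit.step subsetD)
    qed (use pa in simp)
  qed
  then show "orbit ?p x \<subseteq> insert a (orbit q x)" by blast
qed

lemma cycle_minima_transpose_comp:
  fixes a :: "'a::linorder"
  assumes "q permutes S" "\<And>x. x \<in> S \<Longrightarrow> x < a" "b \<in> insert a S"
  shows "cycle_minima (insert a S) (Transposition.transpose a b \<circ> q)
           = cycle_minima S q \<union> (if b = a then {a} else {})"
proof -
  let ?p = "Transposition.transpose a b \<circ> q"
  have aS: "a \<notin> S" using assms(2) by blast
  have "(\<forall>y\<in>orbit ?p x. x \<le> y) \<longleftrightarrow> (\<forall>y\<in>orbit q x. x \<le> y)" if "x \<in> S" for x
    using orbit_transpose_comp[OF assms(1) aS that] assms(2)[OF that] by fastforce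
  moreover have "a \<in> cycle_minima (insert a S) ?p \<longleftrightarrow> b = a"
  proof (cases "b = a")
    case True
    then have "orbit ?p a = {a}" using permutes_not_in[OF assms(1) aS] by (simp add: orbit_eq_singleton_iff)
    then show ?thesis using True by (simp add: cycle_minima_def)
  next
    case False
    have "b \<in> orbit ?p a" using permutes_not_in[OF assms(1) aS] by (metis orbit.base comp_apply transpose_apply_first)
    moreover have "b < a" using False assms(2,3) by auto
    ultimately have "\<not> (\<forall>y\<in>orbit ?p a. a \<le> y)" by (meson not_le)
    then show ?thesis using False by (simp add: cycle_minima_def)
  qed
  ultimately show ?thesis using aS by (auto simp: cycle_minima_def)
qed

lemma sum_permutes_card_cycle_minima:
  "(\<Sum>p | p permutes {1..m}. real (card (cycle_minima {1..m} p))) = fact m * harm m"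
proof (induction m)
  case (Suc m)
  let ?P = "{p. p permutes {1..m}}"
  have "{1..Suc m} = insert (Suc m) {1..m}" by auto
  then have "(\<Sum>p | p permutes {1..Suc m}. real (card (cycle_minima {1..Suc m} p)))
      = (\<Sum>b\<in>{1..Suc m}. \<Sum>q\<in>?P. real (card (cycle_minima (insert (Suc m) {1..m})
                                                 (Transposition.transpose (Suc m) b \<circ> q))))"
    by (simp add: sum_over_permutations_insert)
  also have "\<dots> = (\<Sum>b\<in>{1..Suc m}. \<Sum>q\<in>?P. real (card (cycle_minima {1..m} q)) + (if b = Suc m then 1 else 0))"
  proof (intro sum.cong refl)
    fix b q assume "b \<in> {1..Suc m}" "q \<in> ?P"
    moreover have "Suc m \<notin> cycle_minima {1..m} q" by (simp add: cycle_minima_def)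
    ultimately show "real (card (cycle_minima (insert (Suc m) {1..m}) (Transposition.transpose (Suc m) b \<circ> q)))
                       = real (card (cycle_minima {1..m} q)) + (if b = Suc m then 1 else 0)"
      by (subst cycle_minima_transpose_comp[where S = "{1..m}"])
         (auto simp: cycle_minima_def card_insert_if)
  qed
  also have "\<dots> = real (Suc m) * (fact m * harm m) + fact m"
    using Suc.IH by (simp add: sum.distrib card_permutations finite_permutations)
  also have "\<dots> = fact (Suc m) * harm (Suc m)"
    by (simp add: harm_Suc field_simps)
  finally show ?case .
qed (simp add: cycle_minima_def harm_def)

lemma expect_perm_altdef: "expect_perm m f = (\<Sum>\<pi> | \<pi> permutes {1..m}. f \<pi>) / fact m"
  by (simp add: expect_perm_def card_permutations)

lemma expect_perm_const: "expect_perm m (\<lambda>_. c) = c"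
  by (simp add: expect_perm_altdef card_permutations)

lemma expect_perm_add: "expect_perm m (\<lambda>\<pi>. f \<pi> + g \<pi>) = expect_perm m f + expect_perm m g"
  by (simp add: expect_perm_def sum.distrib add_divide_distrib)

lemma expect_perm_diff: "expect_perm m (\<lambda>\<pi>. f \<pi> - g \<pi>) = expect_perm m f - expect_perm m g"
  by (simp add: expect_perm_def sum_subtractf diff_divide_distrib)

lemma expect_perm_mult_left: "expect_perm m (\<lambda>\<pi>. c * f \<pi>) = c * expect_perm m f"
  by (simp add: expect_perm_def sum_distrib_left)

lemma expect_perm_mult_right: "expect_perm m (\<lambda>\<pi>. f \<pi> * c) = expect_perm m f * c"
  by (simp add: expect_perm_def sum_distrib_right)

lemma expect_perm_cong:
  "(\<And>\<pi>. \<pi> permutes {1..m} \<Longrightarrow> f \<pi> = g \<pi>) \<Longrightarrow> expect_perm m f = expect_perm m g"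
  by (simp add: expect_perm_def)

lemma expect_perm_mono:
  "(\<And>\<pi>. \<pi> permutes {1..m} \<Longrightarrow> f \<pi> \<le> g \<pi>) \<Longrightarrow> expect_perm m f \<le> expect_perm m g"
  unfolding expect_perm_def by (intro divide_right_mono sum_mono) auto

lemma expect_num_pns:
  assumes "m \<ge> 1"
  shows "expect_perm m (\<lambda>\<pi>. real (num_pns (sweep_plan m \<pi>))) = real m + harm m - 2"
proof -
  have nonempty: "{1..m} \<noteq> {}" using assms by simp
  have fixed: "expect_perm m (\<lambda>\<pi>. real (card ({1..m} \<inter> fixpoints \<pi>))) = 1"
    unfolding expect_perm_altdef of_nat_sum[symmetric]
      sum_permutes_card_fixpoints[OF finite_atLeastAtMost nonempty] by simp
  have cycles: "expect_perm m (\<lambda>\<pi>. real (card (cycle_minima {1..m} \<pi>))) = harm m"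
    unfolding expect_perm_altdef sum_permutes_card_cycle_minima by simp
  have "expect_perm m (\<lambda>\<pi>. real (num_pns (sweep_plan m \<pi>)))
          = expect_perm m (\<lambda>\<pi>. real m + real (card (cycle_minima {1..m} \<pi>))
                                  - 2 * real (card ({1..m} \<inter> fixpoints \<pi>)))"
    by (rule expect_perm_cong) (rule sweep_plan_cost(1))
  also have "\<dots> = real m + harm m - 2"
    unfolding expect_perm_diff expect_perm_add expect_perm_const expect_perm_mult_left fixed cycles
    by simp
  finally show ?thesis .
qed

lemma expect_displacement:
  assumes "m \<ge> 1"
  shows "expect_perm m (displacement {1..m}) = (real m ^ 2 - 1) / 3"
proof -
  have "fact m = real m * fact (m - 1)" using assms by (simp add: fact_reduce)
  then show ?thesis
    unfolding expect_perm_altdef sum_permutes_displacement using assms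
    by (simp add: field_simps power2_eq_square power3_eq_cube)
qed

lemma expect_travel_bounds:
  assumes "m \<ge> 1"
  shows "expect_perm m (\<lambda>\<pi>. travel (sweep_plan m \<pi>)) \<in> {(real m ^ 2 - 1) / 3 .. (real m ^ 2 - 1) / 3 + 2 * real m}"
proof -
  have "expect_perm m (displacement {1..m}) \<le> expect_perm m (\<lambda>\<pi>. travel (sweep_plan m \<pi>))"
    by (rule expect_perm_mono) (rule sweep_plan_cost(2))
  moreover have "expect_perm m (\<lambda>\<pi>. travel (sweep_plan m \<pi>))
                   \<le> expect_perm m (\<lambda>\<pi>. displacement {1..m} \<pi> + 2 * real m)"
    by (rule expect_perm_mono) (rule sweep_plan_cost(3))
  ultimately show ?thesis
    unfolding expect_perm_add expect_perm_const expect_displacement[OF assms] by simp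
qed

lemma expect_travel_asymp_equiv:
  "(\<lambda>m. expect_perm m (\<lambda>\<pi>. travel (sweep_plan m \<pi>))) \<sim>[at_top] (\<lambda>m. real m ^ 2 / 3)"
proof (rule asymp_equiv_sandwich_real)
  show "(\<lambda>m::nat. (real m ^ 2 - 1) / 3) \<sim>[at_top] (\<lambda>m. real m ^ 2 / 3)"
    and "(\<lambda>m::nat. (real m ^ 2 - 1) / 3 + 2 * real m) \<sim>[at_top] (\<lambda>m. real m ^ 2 / 3)"
    by real_asymp+
  show "\<forall>\<^sub>F m in at_top. expect_perm m (\<lambda>\<pi>. travel (sweep_plan m \<pi>))
          \<in> {(real m ^ 2 - 1) / 3 .. (real m ^ 2 - 1) / 3 + 2 * real m}"
    using eventually_ge_at_top[of 1] by eventually_elim (rule expect_travel_bounds)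
qed

lemma expect_total_cost_asymp_equiv:
  assumes "cp > 0" "ct > 0"
  shows "(\<lambda>m. expect_perm m (\<lambda>\<pi>. total_cost cp ct (sweep_plan m \<pi>)))
           \<sim>[at_top] (\<lambda>m. (real m + harm m - 2) * cp + real m ^ 2 * ct / 3)"
proof (rule smallo_imp_asymp_equiv)
  let ?E = "\<lambda>m. expect_perm m (\<lambda>\<pi>. travel (sweep_plan m \<pi>))"
  let ?G = "\<lambda>m::nat. (real m + harm m - 2) * cp + real m ^ 2 * ct / 3"
  have "(\<lambda>m. ?E m - real m ^ 2 / 3) \<in> o(\<lambda>m. real m ^ 2 / 3)"
    using expect_travel_asymp_equiv by (rule asymp_equiv_imp_diff_smallo)
  then have small: "(\<lambda>m. (?E m - real m ^ 2 / 3) * ct) \<in> o(\<lambda>m. real m ^ 2 / 3)"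
    using assms(2) by simp
  have "\<forall>\<^sub>F m in at_top. norm (real m ^ 2 / 3) \<le> (1 / ct) * norm (?G m)"
    using eventually_ge_at_top[of 2]
  proof eventually_elim
    case (elim m)
    have "(2::real) \<le> real m" using elim by simp
    then have "0 \<le> real m + harm m - 2" using harm_nonneg[of m, where 'a = real] by linarith
    then have "0 \<le> (real m + harm m - 2) * cp" using assms(1) by simp
    then show ?case using assms(2) by (simp add: field_simps)
  qed
  then have "(\<lambda>m. real m ^ 2 / 3) \<in> O(?G)" by (rule bigoI)
  with small have "(\<lambda>m. (?E m - real m ^ 2 / 3) * ct) \<in> o(?G)" by (rule landau_o.small_big_trans)
  moreover have "\<forall>\<^sub>F m in at_top. (?E m - real m ^ 2 / 3) * ct
               = expect_perm m (\<lambda>\<pi>. total_cost cp ct (sweep_plan m \<pi>)) - ?G m"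
    using eventually_ge_at_top[of 1]
  proof eventually_elim
    case (elim m)
    have "expect_perm m (\<lambda>\<pi>. total_cost cp ct (sweep_plan m \<pi>)) = (real m + harm m - 2) * cp + ?E m * ct"
      unfolding total_cost_def expect_perm_add expect_perm_mult_right expect_num_pns[OF elim] ..
    then show ?case by (simp add: algebra_simps)
  qed
  ultimately show "(\<lambda>m. expect_perm m (\<lambda>\<pi>. total_cost cp ct (sweep_plan m \<pi>)) - ?G m) \<in> o(?G)"
    by (rule landau_o.small.in_cong[THEN iffD1, rotated])
qed

theorem proposition3:
  shows "(\<forall>m::nat. m \<ge> 1 \<longrightarrow>
            expect_perm m (\<lambda>\<pi>. real (num_pns (sweep_plan m \<pi>))) = real m + harm m - 2)
       \<and> ((\<lambda>m::nat. expect_perm m (\<lambda>\<pi>. travel (sweep_plan m \<pi>))) \<sim>[at_top] (\<lambda>m. real m ^ 2 / 3))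
       \<and> (\<forall>cp ct::real. cp > 0 \<longrightarrow> ct > 0 \<longrightarrow>
            ((\<lambda>m::nat. expect_perm m (\<lambda>\<pi>. total_cost cp ct (sweep_plan m \<pi>)))
               \<sim>[at_top] (\<lambda>m. (real m + harm m - 2) * cp + real m ^ 2 * ct / 3)))"
  using expect_num_pns expect_travel_asymp_equiv expect_total_cost_asymp_equiv by blast

end
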